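(* Let $n\in\mathbb{N}$ and let $\mathcal{A}_n$ be a Sperner family of subsets of $[1,n]_{\mathbb{Z}}$. For $0\le k\le n$ let $a_k=|\{A\in\mathcal{A}_n: |A|=k\}|$. Then $$\sum_{k=0}^n\frac{a_k}{\binom{n}{k}}\le 4.$$
   Context: $[1,n]_{\mathbb{Z}}=\{1,\dots,n\}$. A collection $\mathcal{A}_n$ of subsets of $[1,n]_{\mathbb{Z}}$ is called a Sperner family if for each $A\in\mathcal{A}_n$ at least one of the following holds: (1) there exists $B_A\subset[1,n]_{\mathbb{Z}}\setminus A$ with $|B_A|\ge n/2$ such that every $A'\supset A$ with $A'\cap B_A\neq\emptyset$ satisfies $A'\notin\mathcal{A}_n$; (2) there exists $B'_A\subset A$ with $|B'_A|\ge n/2$ such that every $A'\subset A$ with $B'_A\setminus A'\ne\emptyset$ satisfies $A'\notin\mathcal{A}_n$. *)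

theory Defs
  imports Complex_Main
begin

text \<open>The paper's (generalised) notion of a Sperner family of subsets of {1..n}.\<close>
definition sperner_family :: "nat \<Rightarrow> nat set set \<Rightarrow> bool" where
  "sperner_family n \<A> \<longleftrightarrow>
     \<A> \<subseteq> Pow {1..n} \<and>
     (\<forall>A\<in>\<A>.
        (\<exists>B. B \<subseteq> {1..n} - A \<and> real (card B) \<ge> real n / 2 \<and>
             (\<forall>A'. A \<subseteq> A' \<longrightarrow> A' \<inter> B \<noteq> {} \<longrightarrow> A' \<notin> \<A>))
      \<or> (\<exists>B'. B' \<subseteq> A \<and> real (card B') \<ge> real n / 2 \<and>
             (\<forall>A'. A' \<subseteq> A \<longrightarrow> B' - A' \<noteq> {} \<longrightarrow> A' \<notin> \<A>)))"

end

theory Submission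
  imports Defs "HOL-Combinatorics.Multiset_Permutations"
begin

text \<open>
  A permutation xs of the n-element ground set S encodes the maximal chain of its prefix sets,
  and A lies on it iff A is the set of the first card A entries; exactly
  card A! * (n - card A)! of the n! permutations pass through A.  Mark the chain xs for A if,
  in case A has an upward blocker B, the entry following A lies in B, and in case A has a
  downward blocker B, the last entry of A lies in B.  The blocker covers half of the possible
  choices of that entry, so at least half of the chains through A are marked for A.  A chain is
  marked for at most one set of each kind: for X, Y on the chain with card X < card Y, an upward
  mark for X puts an element of the blocker of X into Y, and a downward mark for Y removes an
  element of the blocker of Y from X; both are forbidden.  Double counting marked pairs gives
  the sum of card A! * (n - card A)! / 2 over the family at most 2 * n!, which is the claim
  after division by n!.
\<close>

lemma permutations_of_set_with_prefix:
  assumes "distinct ys" "set ys \<subseteq> S"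
  shows "{xs \<in> permutations_of_set S. take (length ys) xs = ys}
         = (\<lambda>zs. ys @ zs) ` permutations_of_set (S - set ys)"
proof (intro equalityI subsetI)
  fix xs assume "xs \<in> {xs \<in> permutations_of_set S. take (length ys) xs = ys}"
  then have xs: "set xs = S" "distinct xs" "take (length ys) xs = ys"
    by (auto simp: permutations_of_set_def)
  define zs where "zs = drop (length ys) xs"
  have split: "xs = ys @ zs"
    unfolding zs_def using xs(3) by (metis append_take_drop_id)
  then have "zs \<in> permutations_of_set (S - set ys)"
    using xs(1,2) by (auto simp: permutations_of_set_def)
  with split show "xs \<in> (\<lambda>zs. ys @ zs) ` permutations_of_set (S - set ys)"
    by blast
next
  fix xs assume "xs \<in> (\<lambda>zs. ys @ zs) ` permutations_of_set (S - set ys)"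
  then show "xs \<in> {xs \<in> permutations_of_set S. take (length ys) xs = ys}"
    using assms by (auto simp: permutations_of_set_def)
qed

lemma card_permutations_of_set_with_prefix:
  assumes "finite S" "distinct ys" "set ys \<subseteq> S"
  shows "card {xs \<in> permutations_of_set S. take (length ys) xs = ys} = fact (card S - length ys)"
proof -
  have "inj_on (\<lambda>zs. ys @ zs) (permutations_of_set (S - set ys))"
    by (simp add: inj_on_def)
  moreover have "card (S - set ys) = card S - length ys"
    using assms by (simp add: card_Diff_subset distinct_card)
  ultimately show ?thesis
    using assms by (simp add: permutations_of_set_with_prefix card_image)
qed

lemma card_permutations_of_set_prefix_in:
  assumes "finite S" and Z: "\<And>ys. ys \<in> Z \<Longrightarrow> distinct ys \<and> set ys \<subseteq> S \<and> length ys = m"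
  shows "card {xs \<in> permutations_of_set S. take m xs \<in> Z} = card Z * fact (card S - m)"
proof -
  have "Z \<subseteq> {ys. set ys \<subseteq> S \<and> length ys = m}"
    using Z by blast
  then have "finite Z"
    using finite_lists_length_eq[OF \<open>finite S\<close>] by (rule finite_subset)
  have "{xs \<in> permutations_of_set S. take m xs \<in> Z}
        = (\<Union>ys\<in>Z. {xs \<in> permutations_of_set S. take (length ys) xs = ys})"
    using Z by auto
  also have "card \<dots> = (\<Sum>ys\<in>Z. card {xs \<in> permutations_of_set S. take (length ys) xs = ys})"
    using \<open>finite Z\<close> Z by (intro card_UN_disjoint) auto
  also have "\<dots> = (\<Sum>ys\<in>Z. fact (card S - m))"
  proof (rule sum.cong[OF refl])
    fix ys assume "ys \<in> Z"
    then show "card {xs \<in> permutations_of_set S. take (length ys) xs = ys} = fact (card S - m)"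
      using Z card_permutations_of_set_with_prefix[OF \<open>finite S\<close>, of ys] by auto
  qed
  finally show ?thesis by simp
qed

lemma card_permutations_of_set_initial_segment:
  assumes "finite S" "A \<subseteq> S"
  shows "card {xs \<in> permutations_of_set S. set (take (card A) xs) = A}
         = fact (card A) * fact (card S - card A)"
proof -
  have "finite A"
    using assms finite_subset by blast
  then have "{xs \<in> permutations_of_set S. set (take (card A) xs) = A}
        = {xs \<in> permutations_of_set S. take (card A) xs \<in> permutations_of_set A}"
    by (auto simp: permutations_of_set_def)
  also have "card \<dots> = card (permutations_of_set A) * fact (card S - card A)"
    using assms by (intro card_permutations_of_set_prefix_in)
      (auto simp: permutations_of_set_def distinct_card)
  finally show ?thesis
    using \<open>finite A\<close> by simp
qed

lemma card_permutations_of_set_initial_segment_next: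
  assumes "finite S" "A \<subseteq> S" "x \<in> S - A"
  shows "card {xs \<in> permutations_of_set S. set (take (card A) xs) = A \<and> xs ! card A = x}
         = fact (card A) * fact (card S - card A - 1)"
proof -
  let ?k = "card A"
  have "finite A"
    using assms finite_subset by blast
  have "card A < card S"
    using assms by (intro psubset_card_mono) auto
  have "take (Suc ?k) xs \<in> (\<lambda>ys. ys @ [x]) ` permutations_of_set A
        \<longleftrightarrow> set (take ?k xs) = A \<and> xs ! ?k = x" if "xs \<in> permutations_of_set S" for xs
  proof -
    have "?k < length xs"
      using that \<open>card A < card S\<close> by (simp add: length_finite_permutations_of_set)
    then have "take (Suc ?k) xs = take ?k xs @ [xs ! ?k]"
      by (rule take_Suc_conv_app_nth)
    then show ?thesis
      using that \<open>finite A\<close> by (auto simp: permutations_of_set_def)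
  qed
  then have "{xs \<in> permutations_of_set S. set (take ?k xs) = A \<and> xs ! ?k = x}
        = {xs \<in> permutations_of_set S. take (Suc ?k) xs \<in> (\<lambda>ys. ys @ [x]) ` permutations_of_set A}"
    by blast
  also have "card \<dots> = card ((\<lambda>ys. ys @ [x]) ` permutations_of_set A) * fact (card S - Suc ?k)"
    using assms by (intro card_permutations_of_set_prefix_in)
      (auto simp: permutations_of_set_def distinct_card)
  also have "card ((\<lambda>ys. ys @ [x]) ` permutations_of_set A) = fact ?k"
    using \<open>finite A\<close> by (subst card_image) (auto simp: inj_on_def)
  finally show ?thesis by simp
qed

lemma nth_notin_set_take:
  assumes "distinct xs" "i < length xs"
  shows "xs ! i \<notin> set (take i xs)"
proof -
  have "xs ! i \<in> set (drop i xs)"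
    by (simp add: Cons_nth_drop_Suc[OF assms(2), symmetric])
  then show ?thesis
    using set_take_disj_set_drop_if_distinct[OF assms(1) order_refl] by blast
qed

lemma set_take_Suc_eq_iff:
  assumes "distinct xs" "i < length xs" "x \<in> A"
  shows "set (take (Suc i) xs) = A \<and> xs ! i = x \<longleftrightarrow> set (take i xs) = A - {x} \<and> xs ! i = x"
  using nth_notin_set_take[OF assms(1,2)] take_Suc_conv_app_nth[OF assms(2)] assms(3) by auto

text \<open>
  The chains through A that leave A by an element of B, resp. enter A by an element of B.  At
  the top, resp. bottom, of the lattice there is no such element and every chain through A counts.
\<close>

definition upper_chains :: "'a set \<Rightarrow> 'a set \<Rightarrow> 'a set \<Rightarrow> 'a list set" where
  "upper_chains S A B = {xs \<in> permutations_of_set S.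
     set (take (card A) xs) = A \<and> (card A < card S \<longrightarrow> xs ! card A \<in> B)}"

definition lower_chains :: "'a set \<Rightarrow> 'a set \<Rightarrow> 'a set \<Rightarrow> 'a list set" where
  "lower_chains S A B = {xs \<in> permutations_of_set S.
     set (take (card A) xs) = A \<and> (0 < card A \<longrightarrow> xs ! (card A - 1) \<in> B)}"

lemma card_upper_chains_ge:
  assumes "finite S" "A \<subseteq> S" "B \<subseteq> S - A" "card S - card A \<le> 2 * card B"
  shows "fact (card A) * fact (card S - card A) \<le> 2 * card (upper_chains S A B)"
proof (cases "card A < card S")
  case True
  let ?k = "card A" and ?n = "card S"
  have "finite B"
    using assms finite_subset by blast
  have "upper_chains S A B
        = (\<Union>x\<in>B. {xs \<in> permutations_of_set S. set (take ?k xs) = A \<and> xs ! ?k = x})"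
    using True by (auto simp: upper_chains_def)
  also have "card \<dots> = (\<Sum>x\<in>B. card {xs \<in> permutations_of_set S. set (take ?k xs) = A \<and> xs ! ?k = x})"
    using \<open>finite B\<close> by (intro card_UN_disjoint) auto
  also have "\<dots> = card B * (fact ?k * fact (?n - ?k - 1))"
    using assms card_permutations_of_set_initial_segment_next[OF assms(1,2)] by (simp add: subset_iff)
  finally have card_eq: "card (upper_chains S A B) = card B * (fact ?k * fact (?n - ?k - 1))" .
  have "fact (?n - ?k) = (?n - ?k) * (fact (?n - ?k - 1) :: nat)"
    using True fact_reduce[of "?n - ?k", where 'a = nat] by simp
  then have "fact ?k * fact (?n - ?k) = (?n - ?k) * (fact ?k * fact (?n - ?k - 1))"
    by simp
  also have "\<dots> \<le> (2 * card B) * (fact ?k * fact (?n - ?k - 1))"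
    using assms(4) by (rule mult_right_mono) simp
  finally show ?thesis
    unfolding card_eq by simp
next
  case False
  then have "upper_chains S A B = {xs \<in> permutations_of_set S. set (take (card A) xs) = A}"
    by (auto simp: upper_chains_def)
  then show ?thesis
    using card_permutations_of_set_initial_segment[OF assms(1,2)] by simp
qed

lemma card_lower_chains_ge:
  assumes "finite S" "A \<subseteq> S" "B \<subseteq> A" "card A \<le> 2 * card B"
  shows "fact (card A) * fact (card S - card A) \<le> 2 * card (lower_chains S A B)"
proof (cases "card A = 0")
  case False
  let ?k = "card A" and ?n = "card S"
  have "finite A"
    using assms(1,2) finite_subset by blast
  then have "finite B"
    using assms(3) finite_subset by blast
  have "?k \<le> ?n"
    using assms(1,2) by (rule card_mono)
  have take_iff: "set (take ?k xs) = A \<and> xs ! (?k - 1) = x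
        \<longleftrightarrow> set (take (?k - 1) xs) = A - {x} \<and> xs ! (?k - 1) = x"
    if "xs \<in> permutations_of_set S" "x \<in> B" for xs x
  proof -
    have "?k - 1 < length xs"
      using length_finite_permutations_of_set[OF that(1)] False \<open>?k \<le> ?n\<close> by simp
    moreover have "x \<in> A"
      using that(2) assms(3) by blast
    moreover have "Suc (?k - 1) = ?k"
      using False by simp
    ultimately show ?thesis
      using set_take_Suc_eq_iff[OF permutations_of_setD(2)[OF that(1)]] by metis
  qed
  have "lower_chains S A B = (\<Union>x\<in>B. {xs \<in> permutations_of_set S.
               set (take (?k - 1) xs) = A - {x} \<and> xs ! (?k - 1) = x})"
    using False take_iff unfolding lower_chains_def by blast
  also have "card \<dots> = (\<Sum>x\<in>B. card {xs \<in> permutations_of_set S.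
               set (take (?k - 1) xs) = A - {x} \<and> xs ! (?k - 1) = x})"
    using \<open>finite B\<close> by (intro card_UN_disjoint) auto
  also have "\<dots> = (\<Sum>x\<in>B. fact (?k - 1) * fact (?n - ?k))"
  proof (rule sum.cong[OF refl])
    fix x assume "x \<in> B"
    then have "x \<in> A" "card (A - {x}) = ?k - 1"
      using assms(3) \<open>finite A\<close> by auto
    then show "card {xs \<in> permutations_of_set S.
               set (take (?k - 1) xs) = A - {x} \<and> xs ! (?k - 1) = x}
             = fact (?k - 1) * fact (?n - ?k)"
      using card_permutations_of_set_initial_segment_next[OF assms(1), of "A - {x}" x] assms(2) False
      by (simp add: subset_iff)
  qed
  finally have card_eq: "card (lower_chains S A B) = card B * (fact (?k - 1) * fact (?n - ?k))"
    by simp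
  have "fact ?k = ?k * (fact (?k - 1) :: nat)"
    using False fact_reduce[of ?k, where 'a = nat] by simp
  then have "fact ?k * fact (?n - ?k) = ?k * (fact (?k - 1) * fact (?n - ?k))"
    by simp
  also have "\<dots> \<le> (2 * card B) * (fact (?k - 1) * fact (?n - ?k))"
    using assms(4) by (rule mult_right_mono) simp
  finally show ?thesis
    unfolding card_eq by simp
next
  case True
  then have "lower_chains S A B = {xs \<in> permutations_of_set S. set (take (card A) xs) = A}"
    by (auto simp: lower_chains_def)
  then show ?thesis
    using card_permutations_of_set_initial_segment[OF assms(1,2)] by simp
qed

lemma upper_chain_meets:
  assumes "xs \<in> upper_chains S X B" "set (take (card Y) xs) = Y" "card X < card Y"
  shows "X \<subseteq> Y" "Y \<inter> B \<noteq> {}"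
proof -
  have xs: "set (take (card X) xs) = X" "length xs = card S"
    using assms(1) by (auto simp: upper_chains_def length_finite_permutations_of_set)
  have "card Y \<le> length xs"
    using card_length[of "take (card Y) xs"] assms(2) by simp
  then have "card X < card S"
    using assms(3) xs(2) by linarith
  then have "xs ! card X \<in> B"
    using assms(1) by (simp add: upper_chains_def)
  moreover have "xs ! card X \<in> Y"
    using assms(2,3) \<open>card X < card S\<close> xs(2) in_set_conv_nth[of "xs ! card X" "take (card Y) xs"]
    by force
  ultimately show "Y \<inter> B \<noteq> {}"
    by blast
  show "X \<subseteq> Y"
    using set_take_subset_set_take[of "card X" "card Y" xs] assms(2,3) xs(1) by simp
qed

lemma lower_chain_meets:
  assumes "xs \<in> lower_chains S Y B" "set (take (card X) xs) = X" "card X < card Y"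
  shows "X \<subseteq> Y" "\<not> B \<subseteq> X"
proof -
  have xs: "set (take (card Y) xs) = Y" "distinct xs"
    using assms(1) by (auto simp: lower_chains_def permutations_of_set_def)
  have "card Y \<le> length xs"
    using card_length[of "take (card Y) xs"] xs(1) by simp
  have "xs ! (card Y - 1) \<in> B"
    using assms(1,3) by (simp add: lower_chains_def)
  moreover have "xs ! (card Y - 1) \<notin> set (take (card Y - 1) xs)"
    using nth_notin_set_take[OF xs(2)] assms(3) \<open>card Y \<le> length xs\<close> by simp
  moreover have "X \<subseteq> set (take (card Y - 1) xs)"
    using set_take_subset_set_take[of "card X" "card Y - 1" xs] assms(2,3) by simp
  ultimately show "\<not> B \<subseteq> X"
    by blast
  show "X \<subseteq> Y"
    using set_take_subset_set_take[of "card X" "card Y" xs] assms(2,3) xs(1) by simp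
qed

lemma card_le_1_if_on_chain:
  assumes "finite \<F>" "\<And>A. A \<in> \<F> \<Longrightarrow> set (take (card A) xs) = A"
    and "\<And>X Y. X \<in> \<F> \<Longrightarrow> Y \<in> \<F> \<Longrightarrow> \<not> card X < card Y"
  shows "card \<F> \<le> 1"
proof -
  have "X = Y" if "X \<in> \<F>" "Y \<in> \<F>" for X Y
  proof -
    have "card X = card Y"
      using assms(3) that by (meson linorder_neqE_nat)
    then show ?thesis
      using assms(2) that by metis
  qed
  then show ?thesis
    using card_le_Suc0_iff_eq[OF assms(1)] by auto
qed

lemma card_upper_chains_blocked_le_1:
  assumes "finite \<U>" "\<And>X Y. X \<in> \<U> \<Longrightarrow> Y \<in> \<U> \<Longrightarrow> X \<subseteq> Y \<Longrightarrow> Y \<inter> B X = {}"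
  shows "card {A \<in> \<U>. xs \<in> upper_chains S A (B A)} \<le> 1"
proof (rule card_le_1_if_on_chain)
  show "finite {A \<in> \<U>. xs \<in> upper_chains S A (B A)}"
    using assms(1) by simp
  show "set (take (card A) xs) = A" if "A \<in> {A \<in> \<U>. xs \<in> upper_chains S A (B A)}" for A
    using that by (simp add: upper_chains_def)
  fix X Y assume X: "X \<in> {A \<in> \<U>. xs \<in> upper_chains S A (B A)}"
    and Y: "Y \<in> {A \<in> \<U>. xs \<in> upper_chains S A (B A)}"
  show "\<not> card X < card Y"
  proof
    assume "card X < card Y"
    have "xs \<in> upper_chains S X (B X)" "set (take (card Y) xs) = Y"
      using X Y by (simp_all add: upper_chains_def)
    from upper_chain_meets[OF this \<open>card X < card Y\<close>] show False
      using assms(2) X Y by blast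
  qed
qed

lemma card_lower_chains_blocked_le_1:
  assumes "finite \<D>" "\<And>X Y. X \<in> \<D> \<Longrightarrow> Y \<in> \<D> \<Longrightarrow> X \<subseteq> Y \<Longrightarrow> B Y \<subseteq> X"
  shows "card {A \<in> \<D>. xs \<in> lower_chains S A (B A)} \<le> 1"
proof (rule card_le_1_if_on_chain)
  show "finite {A \<in> \<D>. xs \<in> lower_chains S A (B A)}"
    using assms(1) by simp
  show "set (take (card A) xs) = A" if "A \<in> {A \<in> \<D>. xs \<in> lower_chains S A (B A)}" for A
    using that by (simp add: lower_chains_def)
  fix X Y assume X: "X \<in> {A \<in> \<D>. xs \<in> lower_chains S A (B A)}"
    and Y: "Y \<in> {A \<in> \<D>. xs \<in> lower_chains S A (B A)}"
  show "\<not> card X < card Y"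
  proof
    assume "card X < card Y"
    have "xs \<in> lower_chains S Y (B Y)" "set (take (card X) xs) = X"
      using X Y by (simp_all add: lower_chains_def)
    from lower_chain_meets[OF this \<open>card X < card Y\<close>] show False
      using assms(2) X Y by blast
  qed
qed

lemma sum_card_le_multiplicity:
  assumes "finite I" "finite P" "\<And>i. i \<in> I \<Longrightarrow> G i \<subseteq> P"
    and "\<And>x. x \<in> P \<Longrightarrow> card {i \<in> I. x \<in> G i} \<le> m"
  shows "(\<Sum>i\<in>I. card (G i)) \<le> m * card P"
proof -
  have "(\<Sum>i\<in>I. card (G i)) = (\<Sum>i\<in>I. card {x \<in> P. x \<in> G i})"
  proof (rule sum.cong[OF refl])
    fix i assume "i \<in> I"
    then have "{x \<in> P. x \<in> G i} = G i"
      using assms(3) by blast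
    then show "card (G i) = card {x \<in> P. x \<in> G i}"
      by simp
  qed
  also have "\<dots> = (\<Sum>x\<in>P. card {i \<in> I. x \<in> G i})"
    using assms(1,2) by (rule sum_multicount_gen) simp
  also have "\<dots> \<le> (\<Sum>x\<in>P. m)"
    using assms(4) by (rule sum_mono)
  finally show ?thesis
    by (simp add: mult.commute)
qed

definition upward_blocker :: "'a set \<Rightarrow> 'a set set \<Rightarrow> 'a set \<Rightarrow> 'a set \<Rightarrow> bool" where
  "upward_blocker S \<A> A B \<longleftrightarrow> B \<subseteq> S - A \<and> card S - card A \<le> 2 * card B \<and>
     (\<forall>A'\<in>\<A>. A \<subseteq> A' \<longrightarrow> A' \<inter> B = {})"

definition downward_blocker :: "'a set set \<Rightarrow> 'a set \<Rightarrow> 'a set \<Rightarrow> bool" where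
  "downward_blocker \<A> A B \<longleftrightarrow> B \<subseteq> A \<and> card A \<le> 2 * card B \<and> (\<forall>A'\<in>\<A>. A' \<subseteq> A \<longrightarrow> B \<subseteq> A')"

text \<open>
  Weakens the bound n / 2 of sperner_family to half of S - A, resp. half of A, which is all the
  counting uses.
\<close>

definition half_blocked_family :: "'a set \<Rightarrow> 'a set set \<Rightarrow> bool" where
  "half_blocked_family S \<A> \<longleftrightarrow> \<A> \<subseteq> Pow S \<and>
     (\<forall>A\<in>\<A>. (\<exists>B. upward_blocker S \<A> A B) \<or> (\<exists>B. downward_blocker \<A> A B))"

theorem half_blocked_family_sum_fact_le:
  assumes "finite S" "half_blocked_family S \<A>"
  shows "(\<Sum>A\<in>\<A>. fact (card A) * fact (card S - card A) :: nat) \<le> 4 * fact (card S)"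
proof -
  define \<U> where "\<U> = {A \<in> \<A>. \<exists>B. upward_blocker S \<A> A B}"
  have "\<A> \<subseteq> Pow S"
    using assms(2) by (simp add: half_blocked_family_def)
  then have "finite \<A>"
    using assms(1) by (simp add: finite_subset)
  have "\<forall>A\<in>\<U>. \<exists>B. upward_blocker S \<A> A B"
    by (simp add: \<U>_def)
  from bchoice[OF this] obtain up where up: "\<forall>A\<in>\<U>. upward_blocker S \<A> A (up A)" ..
  have "\<forall>A\<in>\<A> - \<U>. \<exists>B. downward_blocker \<A> A B"
    using assms(2) by (auto simp: \<U>_def half_blocked_family_def)
  from bchoice[OF this] obtain down where down: "\<forall>A\<in>\<A> - \<U>. downward_blocker \<A> A (down A)" ..
  define G where "G A = (if A \<in> \<U> then upper_chains S A (up A) else lower_chains S A (down A))"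
    for A
  have "fact (card A) * fact (card S - card A) \<le> 2 * card (G A)" if "A \<in> \<A>" for A
  proof (cases "A \<in> \<U>")
    case True
    then show ?thesis
      using up True that \<open>\<A> \<subseteq> Pow S\<close> card_upper_chains_ge[OF assms(1), of A "up A"]
      unfolding G_def upward_blocker_def by auto
  next
    case False
    then show ?thesis
      using down False that \<open>\<A> \<subseteq> Pow S\<close> card_lower_chains_ge[OF assms(1), of A "down A"]
      unfolding G_def downward_blocker_def by auto
  qed
  then have "(\<Sum>A\<in>\<A>. fact (card A) * fact (card S - card A)) \<le> (\<Sum>A\<in>\<A>. 2 * card (G A))"
    by (rule sum_mono)
  also have "\<dots> = 2 * (\<Sum>A\<in>\<A>. card (G A))"
    by (simp add: sum_distrib_left)
  also have "(\<Sum>A\<in>\<A>. card (G A)) \<le> 2 * card (permutations_of_set S)"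
  proof (rule sum_card_le_multiplicity)
    show "G A \<subseteq> permutations_of_set S" for A
      by (auto simp: G_def upper_chains_def lower_chains_def)
  next
    fix xs
    let ?U = "{A \<in> \<U>. xs \<in> upper_chains S A (up A)}"
    let ?D = "{A \<in> \<A> - \<U>. xs \<in> lower_chains S A (down A)}"
    have "card ?U \<le> 1"
      using \<open>finite \<A>\<close> up unfolding \<U>_def upward_blocker_def
      by (intro card_upper_chains_blocked_le_1) auto
    moreover have "card ?D \<le> 1"
      using \<open>finite \<A>\<close> down unfolding downward_blocker_def
      by (intro card_lower_chains_blocked_le_1) auto
    moreover have "{A \<in> \<A>. xs \<in> G A} = ?U \<union> ?D"
      by (auto simp: G_def \<U>_def)
    ultimately show "card {A \<in> \<A>. xs \<in> G A} \<le> 2"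
      using card_Un_le[of ?U ?D] by simp
  qed (use \<open>finite \<A>\<close> in simp_all)
  finally show ?thesis
    using assms(1) by simp
qed

lemma sperner_family_imp_half_blocked_family:
  assumes "sperner_family n \<A>"
  shows "half_blocked_family {1..n} \<A>"
  unfolding half_blocked_family_def
proof (intro conjI ballI)
  show "\<A> \<subseteq> Pow {1..n}"
    using assms by (simp add: sperner_family_def)
  fix A assume "A \<in> \<A>"
  then have "A \<subseteq> {1..n}"
    using \<open>\<A> \<subseteq> Pow {1..n}\<close> by blast
  then have "card A \<le> card {1..n}"
    by (rule card_mono[OF finite_atLeastAtMost])
  then have "card A \<le> n"
    by simp
  have half: "n \<le> 2 * card B" if "real n / 2 \<le> real (card B)" for B :: "nat set"
  proof -
    have "real n \<le> real (2 * card B)"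
      using that by simp
    then show ?thesis
      by (simp only: of_nat_le_iff)
  qed
  have "\<forall>A\<in>\<A>.
        (\<exists>B. B \<subseteq> {1..n} - A \<and> real (card B) \<ge> real n / 2 \<and>
             (\<forall>A'. A \<subseteq> A' \<longrightarrow> A' \<inter> B \<noteq> {} \<longrightarrow> A' \<notin> \<A>))
      \<or> (\<exists>B'. B' \<subseteq> A \<and> real (card B') \<ge> real n / 2 \<and>
             (\<forall>A'. A' \<subseteq> A \<longrightarrow> B' - A' \<noteq> {} \<longrightarrow> A' \<notin> \<A>))"
    using assms unfolding sperner_family_def by (rule conjunct2)
  from bspec[OF this \<open>A \<in> \<A>\<close>] consider
      B where "B \<subseteq> {1..n} - A" "real n / 2 \<le> real (card B)"
        "\<forall>A'. A \<subseteq> A' \<longrightarrow> A' \<inter> B \<noteq> {} \<longrightarrow> A' \<notin> \<A>"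
    | B where "B \<subseteq> A" "real n / 2 \<le> real (card B)"
        "\<forall>A'. A' \<subseteq> A \<longrightarrow> B - A' \<noteq> {} \<longrightarrow> A' \<notin> \<A>"
    by blast
  then show "(\<exists>B. upward_blocker {1..n} \<A> A B) \<or> (\<exists>B. downward_blocker \<A> A B)"
  proof cases
    case (1 B)
    then have "upward_blocker {1..n} \<A> A B"
      using half[of B] unfolding upward_blocker_def by auto
    then show ?thesis by blast
  next
    case (2 B)
    then have "downward_blocker \<A> A B"
      using half[of B] \<open>card A \<le> n\<close> unfolding downward_blocker_def by auto
    then show ?thesis by blast
  qed
qed

lemma sum_card_level_div_binomial:
  assumes "finite S" "\<A> \<subseteq> Pow S"
  shows "(\<Sum>k=0..card S. real (card {A\<in>\<A>. card A = k}) / real (card S choose k))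
         = real (\<Sum>A\<in>\<A>. fact (card A) * fact (card S - card A)) / fact (card S)"
proof -
  let ?n = "card S"
  have "finite \<A>"
    using assms finite_subset by (metis finite_Pow_iff)
  have card_le: "card A \<le> ?n" if "A \<in> \<A>" for A
    using that assms by (auto intro: card_mono)
  have "(\<Sum>k=0..?n. real (card {A\<in>\<A>. card A = k}) / real (?n choose k))
        = (\<Sum>k=0..?n. \<Sum>A\<in>{A\<in>\<A>. card A = k}. 1 / real (?n choose card A))"
    by simp
  also have "\<dots> = (\<Sum>A\<in>\<A>. 1 / real (?n choose card A))"
    using \<open>finite \<A>\<close> card_le by (intro sum.group) auto
  also have "\<dots> = (\<Sum>A\<in>\<A>. real (fact (card A) * fact (?n - card A)) / fact ?n)"
    using card_le by (intro sum.cong) (simp_all add: binomial_fact)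
  finally show ?thesis
    by (simp add: sum_divide_distrib)
qed

theorem lemma2p3:
  fixes n :: nat and \<A> :: "nat set set"
  assumes "sperner_family n \<A>"
  shows "(\<Sum>k=0..n. real (card {A\<in>\<A>. card A = k}) / real (n choose k)) \<le> 4"
proof -
  have blocked: "half_blocked_family {1..n} \<A>"
    using assms by (rule sperner_family_imp_half_blocked_family)
  then have "\<A> \<subseteq> Pow {1..n}"
    by (simp add: half_blocked_family_def)
  have "(\<Sum>A\<in>\<A>. fact (card A) * fact (n - card A) :: nat) \<le> 4 * fact n"
    using half_blocked_family_sum_fact_le[OF _ blocked] by simp
  then have "real (\<Sum>A\<in>\<A>. fact (card A) * fact (n - card A)) / fact n
             \<le> real (4 * fact n) / fact n"
    by (intro divide_right_mono) (simp_all only: of_nat_le_iff fact_ge_zero)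
  also have "\<dots> = 4"
    by simp
  finally show ?thesis
    using sum_card_level_div_binomial[OF _ \<open>\<A> \<subseteq> Pow {1..n}\<close>] by simp
qed

end
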